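(* In the relational model described in the context, for every $\lambda$-term $M$ and every repetition-free list $\vec x=(x_1,\dots,x_k)$ of variables with $\mathrm{FV}(M)\subseteq\{x_1,\dots,x_k\}$, one has $[\![M]\!]^v_{\vec x}\subseteq[\![M^v]\!]_{\vec x}$. Moreover, there exists a closed $\lambda$-term $N$ such that $[\![N]\!]^v\neq[\![N^v]\!]$.
   Context: Bang calculus terms: $T,S ::= x\mid \lambda x.T\mid T\,S\mid \mathrm{der}\,T\mid\ !T$. CbV translation of $\lambda$-terms: $x^v=\,!x$, $(\lambda x.M)^v=\,!(\lambda x.M^v)$, $(MN)^v=(\mathrm{der}\,M^v)\,N^v$. Types: the sets $\mathcal{U}$ and $!\mathcal{U}$ are defined by mutual induction: $\alpha,\beta ::= a\mid a\multimap\alpha$ (elements of $\mathcal{U}$) and $a,b ::= [\alpha_1,\dots,\alpha_k]$, $k\ge0$, finite multisets of elements of $\mathcal{U}$ (elements of $!\mathcal{U}$); so $!\mathcal{U}\subseteq\mathcal{U}$. Environments $\Gamma$ map variables to $!\mathcal{U}$ with $\Gamma(x)\neq[\,]$ for finitely many $x$; $x_1{:}a_1,\dots,x_k{:}a_k$ denotes the environment with those values and $[\,]$ elsewhere; $\Gamma+\Delta$ is pointwise multiset union. System $\vdash_v$ (on $\lambda$-terms): (ax) $x{:}a\vdash_v x:a$; (app) from $\Gamma\vdash_v M:[a\multimap b]$ and $\Delta\vdash_v N:a$ infer $\Gamma+\Delta\vdash_v MN:b$; (lam) from $\Gamma_i,y{:}a_i\vdash_v M:b_i$ for $1\le i\le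 k$ ($k\ge0$) infer $\sum_i\Gamma_i\vdash_v\lambda y.M:[a_1\multimap b_1,\dots,a_k\multimap b_k]$ (here $a,b,a_i,b_i\in!\mathcal{U}$). System $\vdash_!$ (on bang terms): (ax) $x{:}[\alpha]\vdash_! x:\alpha$; (@) from $\Gamma\vdash_! T:a\multimap\beta$ and $\Delta\vdash_! S:a$ infer $\Gamma+\Delta\vdash_! T\,S:\beta$; (!) from $\Gamma_i\vdash_! T:\beta_i$ for $1\le i\le k$ ($k\ge0$) infer $\sum_i\Gamma_i\vdash_!\,!T:[\beta_1,\dots,\beta_k]$; (der) from $\Gamma\vdash_! T:[\alpha]$ infer $\Gamma\vdash_!\mathrm{der}\,T:\alpha$; ($\lambda$) from $\Gamma,x{:}a\vdash_! T:\beta$ infer $\Gamma\vdash_!\lambda x.T:a\multimap\beta$. Interpretations: $[\![M]\!]^v_{\vec x}=\{(a_1,\dots,a_k,\beta)\mid x_1{:}a_1,\dots,x_k{:}a_k\vdash_v M:\beta\text{ derivable}\}$ and $[\![T]\!]_{\vec x}=\{(a_1,\dots,a_k,\beta)\mid x_1{:}a_1,\dots,x_k{:}a_k\vdash_! T:\beta\text{ derivable}\}$; for closed terms and empty list these are sets of types. *)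

theory Defs
  imports Main "HOL-Library.Multiset"
begin

type_synonym var = nat

datatype lterm = LVar var | LLam var lterm | LApp lterm lterm

datatype bterm = BVar var | BLam var bterm | BApp bterm bterm | Der bterm | Bang bterm

fun FVl :: "lterm \<Rightarrow> var set" where
  "FVl (LVar x) = {x}"
| "FVl (LLam x M) = FVl M - {x}"
| "FVl (LApp M N) = FVl M \<union> FVl N"

fun cbv :: "lterm \<Rightarrow> bterm" where
  "cbv (LVar x) = Bang (BVar x)"
| "cbv (LLam x M) = Bang (BLam x (cbv M))"
| "cbv (LApp M N) = BApp (Der (cbv M)) (cbv N)"

text \<open>Types: an element of U is either a multiset a (an element of !U) or an arrow a -o alpha.\<close>
datatype ty = Mset "ty multiset" | Arr "ty multiset" ty

type_synonym env = "var \<Rightarrow> ty multiset"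

definition env_plus :: "env \<Rightarrow> env \<Rightarrow> env" where
  "env_plus G D = (\<lambda>z. G z + D z)"

definition single_env :: "var \<Rightarrow> ty multiset \<Rightarrow> env" where
  "single_env x a = (\<lambda>z. if z = x then a else {#})"

fun env_of :: "var list \<Rightarrow> ty multiset list \<Rightarrow> env" where
  "env_of (x # xs) (a # as) = (env_of xs as)(x := a)"
| "env_of _ _ = (\<lambda>_. {#})"

text \<open>System |-v (all conclusion types lie in !U, i.e. are of the form Mset b).
  The extension "Gamma, y:a" requires Gamma(y) = [].\<close>
inductive vtyp :: "env \<Rightarrow> lterm \<Rightarrow> ty \<Rightarrow> bool" where
  v_ax: "vtyp (single_env x a) (LVar x) (Mset a)"
| v_app: "vtyp G M (Mset {# Arr a (Mset b) #}) \<Longrightarrow> vtyp D N (Mset a)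
          \<Longrightarrow> vtyp (env_plus G D) (LApp M N) (Mset b)"
| v_lam: "\<forall>p \<in> set ps. (case p of (G, a, b) \<Rightarrow> G y = {#} \<and> vtyp (G(y := a)) M (Mset b))
          \<Longrightarrow> vtyp (\<lambda>z. sum_list (map (\<lambda>p. fst p z) ps)) (LLam y M)
                   (Mset (mset (map (\<lambda>(G, a, b). Arr a (Mset b)) ps)))"

inductive btyp :: "env \<Rightarrow> bterm \<Rightarrow> ty \<Rightarrow> bool" where
  b_ax: "btyp (single_env x {#\<alpha>#}) (BVar x) \<alpha>"
| b_app: "btyp G T (Arr a \<beta>) \<Longrightarrow> btyp D S (Mset a) \<Longrightarrow> btyp (env_plus G D) (BApp T S) \<beta>"
| b_bang: "\<forall>p \<in> set ps. (case p of (G, \<beta>) \<Rightarrow> btyp G T \<beta>)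
          \<Longrightarrow> btyp (\<lambda>z. sum_list (map (\<lambda>p. fst p z) ps)) (Bang T) (Mset (mset (map snd ps)))"
| b_der: "btyp G T (Mset {#\<alpha>#}) \<Longrightarrow> btyp G (Der T) \<alpha>"
| b_lam: "G x = {#} \<Longrightarrow> btyp (G(x := a)) T \<beta> \<Longrightarrow> btyp G (BLam x T) (Arr a \<beta>)"

text \<open>Interpretations: tuples (a1,...,ak,beta) represented as pairs (list of a_i, beta).\<close>
definition sem_v :: "lterm \<Rightarrow> var list \<Rightarrow> (ty multiset list \<times> ty) set" where
  "sem_v M xs = {(as, \<beta>). length as = length xs \<and> vtyp (env_of xs as) M \<beta>}"

definition sem_b :: "bterm \<Rightarrow> var list \<Rightarrow> (ty multiset list \<times> ty) set" where
  "sem_b T xs = {(as, \<beta>). length as = length xs \<and> btyp (env_of xs as) T \<beta>}"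

end

theory Submission
  imports Defs
begin

text \<open>The inclusion is a simulation: each rule of the CbV system is derived in the bang system
  for the translated term, where a CbV abstraction typed by a multiset of arrows becomes a
  promoted abstraction; it holds for every list of variables. It is strict because CbV arrows always have a multiset codomain,
  whereas in the bang calculus the self-application \<open>\<lambda>x. x x\<close> can return an arbitrary
  arrow \<open>\<beta>\<close>: it has type \<open>[[[] \<multimap> \<beta>] \<multimap> \<beta>]\<close>, which no CbV derivation can produce.\<close>

lemma btyp_Bang_single: "btyp G T \<alpha> \<Longrightarrow> btyp G (Bang T) (Mset {#\<alpha>#})"
  using b_bang[of "[(G, \<alpha>)]" T] by simp

lemma btyp_Bang_empty: "btyp (\<lambda>_. {#}) (Bang T) (Mset {#})"
  using b_bang[of "[]" T] by simp

lemma btyp_Bang_BVar: "btyp (single_env x a) (Bang (BVar x)) (Mset a)"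
proof -
  obtain \<alpha>s where a: "a = mset \<alpha>s" using ex_mset by metis
  let ?ps = "map (\<lambda>\<alpha>. (single_env x {#\<alpha>#}, \<alpha>)) \<alpha>s"
  have "btyp (\<lambda>z. sum_list (map (\<lambda>p. fst p z) ?ps)) (Bang (BVar x)) (Mset (mset (map snd ?ps)))"
    by (rule b_bang) (auto intro: b_ax)
  moreover have "(\<lambda>z. sum_list (map (\<lambda>p. fst p z) ?ps)) = single_env x a"
    unfolding a by (rule ext, induction \<alpha>s) (auto simp: single_env_def)
  moreover have "mset (map snd ?ps) = a"
    unfolding a by (induction \<alpha>s) auto
  ultimately show ?thesis by simp
qed

lemma btyp_cbv_if_vtyp: "vtyp G M \<beta> \<Longrightarrow> btyp G (cbv M) \<beta>"
proof (induction rule: vtyp.induct)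
  case (v_ax x a)
  show ?case by (simp add: btyp_Bang_BVar)
next
  case (v_app G M a b D N)
  then show ?case by (auto intro: b_app b_der)
next
  case (v_lam ps y M)
  let ?qs = "map (\<lambda>(G, a, b). (G, Arr a (Mset b))) ps"
  have "btyp (\<lambda>z. sum_list (map (\<lambda>p. fst p z) ?qs)) (Bang (BLam y (cbv M))) (Mset (mset (map snd ?qs)))"
  proof (rule b_bang, clarsimp)
    fix G a b
    assume "(G, a, b) \<in> set ps"
    with v_lam.IH have "G y = {#}" "btyp (G(y := a)) (cbv M) (Mset b)"
      by (fastforce simp: fun_upd_def)+
    then show "btyp G (BLam y (cbv M)) (Arr a (Mset b))" by (rule b_lam)
  qed
  moreover have "(\<lambda>z. sum_list (map (\<lambda>p. fst p z) ?qs)) = (\<lambda>z. sum_list (map (\<lambda>p. fst p z) ps))"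
    by (rule ext, induction ps) auto
  moreover have "map snd ?qs = map (\<lambda>(G, a, b). Arr a (Mset b)) ps"
    by (induction ps) auto
  ultimately show ?case by (simp only: cbv.simps)
qed

lemma sem_v_subset_sem_b_cbv: "sem_v M xs \<subseteq> sem_b (cbv M) xs"
  by (auto simp: sem_v_def sem_b_def btyp_cbv_if_vtyp)

lemma vtyp_LLam_arrow: "vtyp G (LLam y M) (Mset c) \<Longrightarrow> t \<in># c \<Longrightarrow> \<exists>a b. t = Arr a (Mset b)"
  by (erule vtyp.cases) auto

lemma btyp_cbv_self_app:
  "btyp (\<lambda>_. {#}) (cbv (LLam x (LApp (LVar x) (LVar x)))) (Mset {#Arr {#Arr {#} \<beta>#} \<beta>#})"
proof -
  have "btyp (single_env x {#Arr {#} \<beta>#}) (Der (Bang (BVar x))) (Arr {#} \<beta>)"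
    by (intro b_der btyp_Bang_single b_ax)
  then have "btyp (env_plus (single_env x {#Arr {#} \<beta>#}) (\<lambda>_. {#}))
      (BApp (Der (Bang (BVar x))) (Bang (BVar x))) \<beta>"
    using btyp_Bang_empty by (rule b_app)
  then have "btyp ((\<lambda>_. {#})(x := {#Arr {#} \<beta>#})) (BApp (Der (Bang (BVar x))) (Bang (BVar x))) \<beta>"
    by (simp add: env_plus_def single_env_def fun_upd_def)
  then have "btyp (\<lambda>_. {#}) (BLam x (BApp (Der (Bang (BVar x))) (Bang (BVar x)))) (Arr {#Arr {#} \<beta>#} \<beta>)"
    by (intro b_lam) auto
  then show ?thesis by (simp add: btyp_Bang_single)
qed

theorem mainTheorem3:
  shows "(\<forall>M xs. distinct xs \<and> FVl M \<subseteq> set xs \<longrightarrow> sem_v M xs \<subseteq> sem_b (cbv M) xs)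
       \<and> (\<exists>N. FVl N = {} \<and> sem_v N [] \<noteq> sem_b (cbv N) [])"
proof (intro conjI allI impI sem_v_subset_sem_b_cbv)
  define N where "N = LLam 0 (LApp (LVar 0) (LVar 0))"
  define \<beta> where "\<beta> = Arr {#} (Mset {#})"
  define \<tau> where "\<tau> = Mset {#Arr {#Arr {#} \<beta>#} \<beta>#}"
  have "([], \<tau>) \<in> sem_b (cbv N) []"
    using btyp_cbv_self_app by (simp add: sem_b_def N_def \<tau>_def)
  moreover have "([], \<tau>) \<notin> sem_v N []"
    using vtyp_LLam_arrow[of _ 0 _ "{#Arr {#Arr {#} \<beta>#} \<beta>#}"]
    by (auto simp: sem_v_def N_def \<tau>_def \<beta>_def)
  moreover have "FVl N = {}"
    by (simp add: N_def)
  ultimately show "\<exists>N. FVl N = {} \<and> sem_v N [] \<noteq> sem_b (cbv N) []"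
    by blast
qed

end
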